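(* Let $R$ be a ring and let $M$ be a right $R$-module which is both a multiplication module and quasi-pseudo principally injective. Then every $M$-cyclic submodule of $M$ is itself quasi-pseudo principally injective.
   Context: All rings are associative with identity and all modules are unitary right $R$-modules. A submodule $N$ of $M$ is called $M$-cyclic if $N\cong M/L$ for some submodule $L$ of $M$; equivalently, $N$ is the image of some endomorphism of $M$. For right $R$-modules $M,N$, the module $M$ is called pseudo principally $N$-injective if for every $N$-cyclic submodule $A$ of $N$, every $R$-monomorphism $A\to M$ extends to an $R$-homomorphism $N\to M$. A module $M$ is quasi-pseudo principally injective (quasi-pp-injective) if it is pseudo principally $M$-injective. A module $M$ is a multiplication module if every submodule $N$ of $M$ is of the form $N=MI$ for some right ideal $I$ of $R$. *)

theory Defs
  imports "HOL-Algebra.Ring" "HOL-Algebra.Ideal"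
begin

text \<open>The module is an abelian group (additive structure of a ring record; its
  multiplicative part is ignored) together with a right scalar action
  rsmult M x a, read as x*a.\<close>

record ('a, 'b) rmodule = "'b ring" +
  rsmult :: "'b \<Rightarrow> 'a \<Rightarrow> 'b"

definition right_module :: "('a, 'c) ring_scheme \<Rightarrow> ('a, 'b, 'd) rmodule_scheme \<Rightarrow> bool" where
  "right_module R M \<longleftrightarrow> ring R \<and> abelian_group M \<and>
     (\<forall>x\<in>carrier M. \<forall>a\<in>carrier R. rsmult M x a \<in> carrier M) \<and>
     (\<forall>x\<in>carrier M. \<forall>y\<in>carrier M. \<forall>a\<in>carrier R.
        rsmult M (x \<oplus>\<^bsub>M\<^esub> y) a = rsmult M x a \<oplus>\<^bsub>M\<^esub> rsmult M y a) \<and>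
     (\<forall>x\<in>carrier M. \<forall>a\<in>carrier R. \<forall>b\<in>carrier R.
        rsmult M x (a \<oplus>\<^bsub>R\<^esub> b) = rsmult M x a \<oplus>\<^bsub>M\<^esub> rsmult M x b) \<and>
     (\<forall>x\<in>carrier M. \<forall>a\<in>carrier R. \<forall>b\<in>carrier R.
        rsmult M x (a \<otimes>\<^bsub>R\<^esub> b) = rsmult M (rsmult M x a) b) \<and>
     (\<forall>x\<in>carrier M. rsmult M x \<one>\<^bsub>R\<^esub> = x)"

definition submodule :: "('a, 'c) ring_scheme \<Rightarrow> ('a, 'b, 'd) rmodule_scheme \<Rightarrow> 'b set \<Rightarrow> bool" where
  "submodule R M N \<longleftrightarrow> additive_subgroup N M \<and>
     (\<forall>x\<in>N. \<forall>a\<in>carrier R. rsmult M x a \<in> N)"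

text \<open>R-homomorphisms between right R-modules (only the values on the carrier matter).\<close>
definition mod_hom :: "('a, 'c) ring_scheme \<Rightarrow> ('a, 'b, 'd) rmodule_scheme \<Rightarrow> ('a, 'e, 'f) rmodule_scheme \<Rightarrow> ('b \<Rightarrow> 'e) set" where
  "mod_hom R M N = {f. f \<in> carrier M \<rightarrow> carrier N \<and>
     (\<forall>x\<in>carrier M. \<forall>y\<in>carrier M. f (x \<oplus>\<^bsub>M\<^esub> y) = f x \<oplus>\<^bsub>N\<^esub> f y) \<and>
     (\<forall>x\<in>carrier M. \<forall>a\<in>carrier R. f (rsmult M x a) = rsmult N (f x) a)}"

definition M_cyclic :: "('a, 'c) ring_scheme \<Rightarrow> ('a, 'b, 'd) rmodule_scheme \<Rightarrow> 'b set \<Rightarrow> bool" where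
  "M_cyclic R M A \<longleftrightarrow> (\<exists>f\<in>mod_hom R M M. f ` carrier M = A)"

definition pseudo_principally_injective ::
  "('a, 'c) ring_scheme \<Rightarrow> ('a, 'b, 'd) rmodule_scheme \<Rightarrow> ('a, 'e, 'f) rmodule_scheme \<Rightarrow> bool" where
  "pseudo_principally_injective R M N \<longleftrightarrow>
     (\<forall>A. M_cyclic R N A \<longrightarrow>
        (\<forall>f\<in>mod_hom R (N\<lparr>carrier := A\<rparr>) M. inj_on f A \<longrightarrow>
           (\<exists>g\<in>mod_hom R N M. \<forall>x\<in>A. g x = f x)))"

definition quasi_pp_injective :: "('a, 'c) ring_scheme \<Rightarrow> ('a, 'b, 'd) rmodule_scheme \<Rightarrow> bool" where
  "quasi_pp_injective R M \<longleftrightarrow> pseudo_principally_injective R M M"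

definition right_ideal :: "('a, 'c) ring_scheme \<Rightarrow> 'a set \<Rightarrow> bool" where
  "right_ideal R I \<longleftrightarrow> additive_subgroup I R \<and>
     (\<forall>x\<in>I. \<forall>r\<in>carrier R. x \<otimes>\<^bsub>R\<^esub> r \<in> I)"

text \<open>MI: the submodule of M generated by all products x*a with x in M and a in I
  (i.e. the set of finite sums of such products).\<close>
definition mod_ideal_prod :: "('a, 'c) ring_scheme \<Rightarrow> ('a, 'b, 'd) rmodule_scheme \<Rightarrow> 'a set \<Rightarrow> 'b set" where
  "mod_ideal_prod R M I =
     \<Inter>{N. submodule R M N \<and> {rsmult M x a | x a. x \<in> carrier M \<and> a \<in> I} \<subseteq> N}"

definition multiplication_module :: "('a, 'c) ring_scheme \<Rightarrow> ('a, 'b, 'd) rmodule_scheme \<Rightarrow> bool" where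
  "multiplication_module R M \<longleftrightarrow>
     (\<forall>N. submodule R M N \<longrightarrow> (\<exists>I. right_ideal R I \<and> N = mod_ideal_prod R M I))"

end

theory Submission
  imports Defs
begin

text \<open>Every submodule of a multiplication module \<open>M\<close> has the form \<open>MI\<close>, and an endomorphism
  \<open>g\<close> maps a generator \<open>xa\<close> of \<open>MI\<close> to \<open>g(x)a \<in> MI\<close>; hence all submodules of \<open>M\<close> are fully
  invariant. Now let \<open>N = \<phi>(M)\<close> be \<open>M\<close>-cyclic. An \<open>N\<close>-cyclic submodule \<open>A = h(N)\<close> of \<open>N\<close> is
  \<open>M\<close>-cyclic as \<open>(h \<circ> \<phi>)(M)\<close>, so a monomorphism \<open>A \<rightarrow> N \<subseteq> M\<close> extends to an endomorphism \<open>g\<close>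
  of \<open>M\<close> by quasi-pp-injectivity; by full invariance \<open>g\<close> restricts to an endomorphism of \<open>N\<close>.\<close>

lemma mod_hom_group_hom:
  assumes "right_module R M" "right_module R M'" "f \<in> mod_hom R M M'"
  shows "group_hom (add_monoid M) (add_monoid M') f"
proof -
  have "group (add_monoid M)" "group (add_monoid M')"
    using assms(1,2) unfolding right_module_def by (simp_all add: abelian_group.a_group)
  then show ?thesis
    using assms(3) unfolding group_hom_def group_hom_axioms_def hom_def mod_hom_def by auto
qed

lemma mod_hom_image_submodule:
  assumes "right_module R M" "right_module R M'" "f \<in> mod_hom R M M'"
  shows "submodule R M' (f ` carrier M)"
proof -
  interpret group_hom "add_monoid M" "add_monoid M'" f
    using mod_hom_group_hom[OF assms] .
  have "subgroup (f ` carrier M) (add_monoid M')"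
    using subgroup_img_is_subgroup[OF G.subgroup_self] by simp
  moreover have "rsmult M' (f x) a \<in> f ` carrier M" if "x \<in> carrier M" "a \<in> carrier R" for x a
  proof -
    have "rsmult M x a \<in> carrier M" using assms(1) that unfolding right_module_def by blast
    moreover have "f (rsmult M x a) = rsmult M' (f x) a"
      using assms(3) that unfolding mod_hom_def by auto
    ultimately show ?thesis by (metis image_eqI)
  qed
  ultimately show ?thesis unfolding submodule_def by (auto intro: additive_subgroupI)
qed

lemma mod_hom_vimage_submodule:
  assumes "right_module R M" "right_module R M'" "g \<in> mod_hom R M M'" "submodule R M' S"
  shows "submodule R M {x \<in> carrier M. g x \<in> S}"
proof -
  interpret group_hom "add_monoid M" "add_monoid M'" g
    using mod_hom_group_hom[OF assms(1-3)] .
  have S: "subgroup S (add_monoid M')"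
    using assms(4) unfolding submodule_def additive_subgroup_def by blast
  have "subgroup {x \<in> carrier M. g x \<in> S} (add_monoid M)"
  proof (rule G.subgroupI)
    show "{x \<in> carrier M. g x \<in> S} \<noteq> {}"
      using hom_one subgroup.one_closed[OF S] G.one_closed by force
  qed (use hom_inv hom_mult G.inv_closed G.m_closed subgroup.m_inv_closed[OF S]
      subgroup.m_closed[OF S] in auto)
  moreover have "\<forall>x\<in>{x \<in> carrier M. g x \<in> S}. \<forall>a\<in>carrier R. rsmult M x a \<in> {x \<in> carrier M. g x \<in> S}"
    using assms unfolding right_module_def mod_hom_def submodule_def by auto
  ultimately show ?thesis unfolding submodule_def by (simp add: additive_subgroupI)
qed

lemma M_cyclic_submodule:
  assumes "right_module R M" "M_cyclic R M N"
  shows "submodule R M N"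
  using assms mod_hom_image_submodule unfolding M_cyclic_def by blast

lemma mod_hom_comp:
  assumes "f \<in> mod_hom R M M'" "g \<in> mod_hom R M' M''"
  shows "g \<circ> f \<in> mod_hom R M M''"
  using assms unfolding mod_hom_def by (auto simp: Pi_def)

lemma mod_hom_restrict_domain:
  assumes "f \<in> mod_hom R M M'" "N \<subseteq> carrier M"
  shows "f \<in> mod_hom R (M\<lparr>carrier := N\<rparr>) M'"
  using assms unfolding mod_hom_def by (auto simp: Pi_def subset_iff)

lemma mod_hom_extend_codomain:
  assumes "f \<in> mod_hom R M (M'\<lparr>carrier := N\<rparr>)" "N \<subseteq> carrier M'"
  shows "f \<in> mod_hom R M M'"
  using assms unfolding mod_hom_def by (auto simp: Pi_def)

lemma mod_hom_restrict_codomain: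
  assumes "f \<in> mod_hom R M M'" "f ` carrier M \<subseteq> N"
  shows "f \<in> mod_hom R M (M'\<lparr>carrier := N\<rparr>)"
  using assms unfolding mod_hom_def by (auto simp: Pi_def)

lemma multiplication_module_submodule_invariant:
  assumes "right_module R M" "multiplication_module R M" "submodule R M N" "g \<in> mod_hom R M M"
  shows "g ` N \<subseteq> N"
proof -
  obtain I where I: "right_ideal R I" "N = mod_ideal_prod R M I"
    using assms(2,3) unfolding multiplication_module_def by blast
  let ?gens = "{rsmult M x a | x a. x \<in> carrier M \<and> a \<in> I}"
  let ?P = "{x \<in> carrier M. g x \<in> N}"
  have I_carrier: "I \<subseteq> carrier R"
    using I(1) unfolding right_ideal_def by (meson additive_subgroup.a_subset)
  have gens_N: "?gens \<subseteq> N"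
    unfolding I(2) mod_ideal_prod_def by blast
  have "?gens \<subseteq> ?P"
  proof
    fix y assume "y \<in> ?gens"
    then obtain x a where xa: "y = rsmult M x a" "x \<in> carrier M" "a \<in> I" by blast
    with I_carrier have a: "a \<in> carrier R" by blast
    have "g y = rsmult M (g x) a" "g x \<in> carrier M"
      using assms(4) xa a unfolding mod_hom_def by auto
    with gens_N xa have "g y \<in> N" by blast
    moreover have "y \<in> carrier M" using assms(1) xa a unfolding right_module_def by blast
    ultimately show "y \<in> ?P" by blast
  qed
  with mod_hom_vimage_submodule[OF assms(1,1,4,3)] have "N \<subseteq> ?P"
    unfolding I(2) mod_ideal_prod_def by blast
  then show ?thesis by blast
qed

lemma M_cyclic_trans:
  assumes "M_cyclic R M N" "M_cyclic R (M\<lparr>carrier := N\<rparr>) A"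
  shows "M_cyclic R M A"
proof -
  obtain \<phi> where \<phi>: "\<phi> \<in> mod_hom R M M" "\<phi> ` carrier M = N"
    using assms(1) unfolding M_cyclic_def by blast
  obtain h where h: "h \<in> mod_hom R (M\<lparr>carrier := N\<rparr>) (M\<lparr>carrier := N\<rparr>)" "h ` N = A"
    using assms(2) unfolding M_cyclic_def by auto
  have "N \<subseteq> carrier M" using \<phi> unfolding mod_hom_def by auto
  then have "h \<in> mod_hom R (M\<lparr>carrier := N\<rparr>) M"
    by (rule mod_hom_extend_codomain[OF h(1)])
  then have "h \<circ> \<phi> \<in> mod_hom R M M"
    using mod_hom_comp[OF mod_hom_restrict_codomain[OF \<phi>(1)]] \<phi>(2) by auto
  moreover have "(h \<circ> \<phi>) ` carrier M = A" using h(2) \<phi>(2) by (metis image_comp)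
  ultimately show ?thesis unfolding M_cyclic_def by blast
qed

theorem proposition2p2:
  fixes R :: "('a, 'c) ring_scheme" and M :: "('a, 'b) rmodule" and N :: "'b set"
  assumes "right_module R M"
    and "multiplication_module R M"
    and "quasi_pp_injective R M"
    and "M_cyclic R M N"
  shows "quasi_pp_injective R (M\<lparr>carrier := N\<rparr>)"
  unfolding quasi_pp_injective_def pseudo_principally_injective_def
proof (intro allI impI ballI)
  fix A f
  assume A: "M_cyclic R (M\<lparr>carrier := N\<rparr>) A"
    and f: "f \<in> mod_hom R (M\<lparr>carrier := N\<rparr>\<lparr>carrier := A\<rparr>) (M\<lparr>carrier := N\<rparr>)"
    and inj: "inj_on f A"
  have N: "submodule R M N" using M_cyclic_submodule[OF assms(1,4)] .
  then have N_carrier: "N \<subseteq> carrier M"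
    unfolding submodule_def by (simp add: additive_subgroup.a_subset)
  have "f \<in> mod_hom R (M\<lparr>carrier := A\<rparr>) M"
    using mod_hom_extend_codomain[OF f N_carrier] by simp
  then obtain g where g: "g \<in> mod_hom R M M" "\<forall>x\<in>A. g x = f x"
    using assms(3) M_cyclic_trans[OF assms(4) A] inj
    unfolding quasi_pp_injective_def pseudo_principally_injective_def by blast
  have "g ` N \<subseteq> N"
    using multiplication_module_submodule_invariant[OF assms(1,2) N g(1)] .
  then have "g \<in> mod_hom R (M\<lparr>carrier := N\<rparr>) (M\<lparr>carrier := N\<rparr>)"
    using mod_hom_restrict_codomain[OF mod_hom_restrict_domain[OF g(1) N_carrier]] by simp
  with g(2) show "\<exists>g\<in>mod_hom R (M\<lparr>carrier := N\<rparr>) (M\<lparr>carrier := N\<rparr>). \<forall>x\<in>A. g x = f x"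
    by blast
qed

end
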